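(* In the uncoupled setting described in the context, for $t\in\mathbb{C}^\times$ not lying on any ray $\ell_\gamma$ with $\bar\Omega(\gamma)\neq0$, the function \[ \log\tau =\frac{1}{4\pi^2}\sum_{\gamma\in\Gamma_\star}\sigma_\gamma\bar\Omega(\gamma)\, e^{2\pi i\theta_\gamma} \Big[\int_{\ell_\gamma} \frac{\mathrm{d} t'}{t'} \,\frac{t}{t'-t}\Big(1+2\pi i\, \frac{Z_\gamma}{t'}\Big)e^{-2\pi i Z_\gamma/t'}-\log (Z_\gamma/t)\Big] \] (with any locally constant choice of branches of $\log(Z_\gamma/t)$) satisfies, for each $a=1,\dots,m$, \[ \sum_{b=1}^{m} \omega^{ab} \frac{\partial \log\tau}{\partial z^b} =\frac{\partial}{\partial t} \log\Big(\mathcal{X}_{\gamma^a}(t)/\mathcal{X}^{\rm sf}_{\gamma^a}(t)\Big). \]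
   Context: Let $\Gamma$ be a lattice with basis $\gamma^1,\dots,\gamma^m$ and skew-symmetric integer pairing $\langle\cdot,\cdot\rangle$ with $\omega^{ab}=\langle\gamma^a,\gamma^b\rangle$ invertible; $\gamma=\sum_aq_a\gamma^a$, $\Gamma_\star=\Gamma\setminus\{0\}$; coordinates $z^a,\theta^a$, $Z_\gamma=\sum_aq_az^a$, $\theta_\gamma=\sum_aq_a\theta^a$; $\sigma$ a quadratic refinement ($\sigma_\gamma\sigma_{\gamma'}=(-1)^{\langle\gamma,\gamma'\rangle}\sigma_{\gamma+\gamma'}$); $\mathcal{X}^{\rm sf}_\gamma(t)=\sigma_\gamma e^{2\pi i(\theta_\gamma-Z_\gamma/t)}$; for $Z_\gamma\ne0$, $\ell_\gamma=\{iZ_\gamma/s:s>0\}$ oriented from $0$ to $\infty$. Let $\bar\Omega:\Gamma_\star\to\mathbb{Q}$ be locally constant in $z$, with $Z_\gamma\neq0$ when $\bar\Omega(\gamma)\ne0$, and uncoupled: $\langle\gamma,\gamma'\rangle=0$ whenever $\bar\Omega(\gamma)\neq0$ and $\bar\Omega(\gamma')\ne0$. In this case the TBA system has the explicit solution \[ \mathcal{X}_\gamma(t)=\mathcal{X}^{\rm sf}_\gamma(t)\exp\Big[\frac{1}{2\pi i}\sum_{\gamma'\in\Gamma_\star}\bar\Omega(\gamma')\langle\gamma,\gamma'\rangle\int_{\ell_{\gamma'}}\frac{\mathrm{d}t'}{t'}\frac{t}{t'-t}\mathcal{X}^{\rm sf}_{\gamma'}(t')\Big], \] which defines $\mathcal{X}_\gamma$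 here. All sums over $\Gamma$ are assumed to converge and be differentiable termwise. *)

theory Defs
  imports "HOL-Analysis.Analysis"
begin

text \<open>The lattice Gamma is identified with 'm => int via the basis gamma^1..gamma^m
  (the index type 'm is finite); gamma = sum_a q_a gamma^a is its charge vector q.\<close>

definition Gstar :: "('m::finite \<Rightarrow> int) set" where
  "Gstar = {q. \<exists>a. q a \<noteq> 0}"

definition basis_charge :: "'m::finite \<Rightarrow> ('m \<Rightarrow> int)" where
  "basis_charge a = (\<lambda>b. if b = a then 1 else 0)"

definition pair :: "('m::finite \<Rightarrow> 'm \<Rightarrow> int) \<Rightarrow> ('m \<Rightarrow> int) \<Rightarrow> ('m \<Rightarrow> int) \<Rightarrow> int" where
  "pair \<omega> p q = (\<Sum>a\<in>UNIV. \<Sum>b\<in>UNIV. p a * q b * \<omega> a b)"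

definition Zc :: "('m::finite \<Rightarrow> complex) \<Rightarrow> ('m \<Rightarrow> int) \<Rightarrow> complex" where
  "Zc z q = (\<Sum>a\<in>UNIV. of_int (q a) * z a)"

definition quad_refinement :: "('m::finite \<Rightarrow> 'm \<Rightarrow> int) \<Rightarrow> (('m \<Rightarrow> int) \<Rightarrow> int) \<Rightarrow> bool" where
  "quad_refinement \<omega> \<sigma> \<longleftrightarrow> (\<forall>g. \<sigma> g \<in> {-1, 1}) \<and>
     (\<forall>g g'. \<sigma> g * \<sigma> g' = (if even (pair \<omega> g g') then 1 else -1) * \<sigma> (\<lambda>a. g a + g' a))"

definition Xsf :: "(('m::finite \<Rightarrow> int) \<Rightarrow> int) \<Rightarrow> ('m \<Rightarrow> complex) \<Rightarrow> ('m \<Rightarrow> complex)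
     \<Rightarrow> ('m \<Rightarrow> int) \<Rightarrow> complex \<Rightarrow> complex" where
  "Xsf \<sigma> \<theta> z g t = of_int (\<sigma> g) * exp (2 * pi * \<i> * (Zc \<theta> g - Zc z g / t))"

definition ray :: "complex \<Rightarrow> complex set" where
  "ray Z = {\<i> * Z / of_real s | s. s > 0}"

text \<open>Integral int_{l} dt'/t' h(t') along the ray l = {i Z u : u > 0}, oriented from 0 to
  infinity, parametrised by t' = i Z u (so dt'/t' = du/u).\<close>
definition ray_int :: "complex \<Rightarrow> (complex \<Rightarrow> complex) \<Rightarrow> complex" where
  "ray_int Z h = integral {0<..} (\<lambda>u::real. h (\<i> * Z * of_real u) / of_real u)"

definition X_term :: "('m::finite \<Rightarrow> 'm \<Rightarrow> int) \<Rightarrow> (('m \<Rightarrow> int) \<Rightarrow> int) \<Rightarrow> (('m \<Rightarrow> int) \<Rightarrow> rat)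
     \<Rightarrow> ('m \<Rightarrow> complex) \<Rightarrow> ('m \<Rightarrow> complex) \<Rightarrow> ('m \<Rightarrow> int) \<Rightarrow> ('m \<Rightarrow> int) \<Rightarrow> complex \<Rightarrow> complex" where
  "X_term \<omega> \<sigma> \<Omega> \<theta> z g g' s =
     of_rat (\<Omega> g') * of_int (pair \<omega> g g') *
     ray_int (Zc z g') (\<lambda>t'. s / (t' - s) * Xsf \<sigma> \<theta> z g' t')"

definition XTBA :: "('m::finite \<Rightarrow> 'm \<Rightarrow> int) \<Rightarrow> (('m \<Rightarrow> int) \<Rightarrow> int) \<Rightarrow> (('m \<Rightarrow> int) \<Rightarrow> rat)
     \<Rightarrow> ('m \<Rightarrow> complex) \<Rightarrow> ('m \<Rightarrow> complex) \<Rightarrow> ('m \<Rightarrow> int) \<Rightarrow> complex \<Rightarrow> complex" where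
  "XTBA \<omega> \<sigma> \<Omega> \<theta> z g s =
     Xsf \<sigma> \<theta> z g s *
     exp (1 / (2 * pi * \<i>) * (\<Sum>\<^sub>\<infinity>g'\<in>Gstar. X_term \<omega> \<sigma> \<Omega> \<theta> z g g' s))"

text \<open>Summand gamma of log tau (without the prefactor 1/(4 pi^2)); L g w is the chosen
  branch of log(Z_gamma(w)/t).\<close>
definition tau_term :: "(('m::finite \<Rightarrow> int) \<Rightarrow> int) \<Rightarrow> (('m \<Rightarrow> int) \<Rightarrow> rat) \<Rightarrow> ('m \<Rightarrow> complex)
     \<Rightarrow> complex \<Rightarrow> (('m \<Rightarrow> int) \<Rightarrow> ('m \<Rightarrow> complex) \<Rightarrow> complex) \<Rightarrow> ('m \<Rightarrow> int) \<Rightarrow> ('m \<Rightarrow> complex) \<Rightarrow> complex" where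
  "tau_term \<sigma> \<Omega> \<theta> t L g w =
     of_int (\<sigma> g) * of_rat (\<Omega> g) * exp (2 * pi * \<i> * Zc \<theta> g) *
     (ray_int (Zc w g)
        (\<lambda>t'. t / (t' - t) * (1 + 2 * pi * \<i> * Zc w g / t') * exp (- 2 * pi * \<i> * Zc w g / t'))
      - L g w)"

definition log_tau :: "(('m::finite \<Rightarrow> int) \<Rightarrow> int) \<Rightarrow> (('m \<Rightarrow> int) \<Rightarrow> rat) \<Rightarrow> ('m \<Rightarrow> complex)
     \<Rightarrow> complex \<Rightarrow> (('m \<Rightarrow> int) \<Rightarrow> ('m \<Rightarrow> complex) \<Rightarrow> complex) \<Rightarrow> ('m \<Rightarrow> complex) \<Rightarrow> complex" where
  "log_tau \<sigma> \<Omega> \<theta> t L w = 1 / (4 * pi\<^sup>2) * (\<Sum>\<^sub>\<infinity>g\<in>Gstar. tau_term \<sigma> \<Omega> \<theta> t L g w)"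

definition termwise_diff :: "'a set \<Rightarrow> ('a \<Rightarrow> complex \<Rightarrow> complex) \<Rightarrow> complex \<Rightarrow> bool" where
  "termwise_diff A f x \<longleftrightarrow>
     (\<forall>\<^sub>F y in nhds x. (\<lambda>g. f g y) summable_on A) \<and>
     (\<lambda>g. deriv (f g) x) summable_on A \<and>
     ((\<lambda>y. \<Sum>\<^sub>\<infinity>g\<in>A. f g y) has_field_derivative (\<Sum>\<^sub>\<infinity>g\<in>A. deriv (f g) x)) (at x)"

end

theory Submission
  imports Defs
begin

text \<open>Both the exponent of \<open>X\<^sub>\<gamma>\<close> and each summand of \<open>log \<tau>\<close> are, along the ray \<open>t' = \<i> Z u\<close>,
  Cauchy-type integrals \<open>\<integral>\<^sub>0\<^sup>\<infinity> \<phi>(u) / (\<i> Z u - s) du\<close>; off the ray the denominator grows like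
  \<open>u + 1\<close>, which justifies differentiating under the integral sign.  Both derivatives reduce to
  \<open>J = \<integral>\<^sub>0\<^sup>\<infinity> exp (- 2 \<pi> / u) / (\<i> Z u - t)\<^sup>2 du\<close>: the \<open>t\<close>-derivative of the \<open>X\<close>-summand is \<open>\<i> Z J\<close>
  by a partial fraction step, and the \<open>z\<^sup>b\<close>-derivative of the \<open>\<tau>\<close>-integral is \<open>q\<^sub>b (2 \<pi> Z J + 1 / Z)\<close>,
  \<open>q\<^sub>b\<close> being the \<open>b\<close>-th charge of \<open>\<gamma>\<close>, by an integration by parts whose boundary term \<open>q\<^sub>b / Z\<close>
  cancels the derivative of the logarithm.  Contracting with \<open>\<omega>\<^sup>a\<^sup>b\<close> produces \<open>\<langle>\<gamma>\<^sup>a, \<gamma>\<rangle>\<close> on both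
  sides.  The identity holds charge by charge.\<close>

lemma set_integrable_inverse_square_Ioi:
  "set_integrable lborel {0<..} (\<lambda>u::real. 1 / (u + 1)^2)"
proof -
  have "filterlim (\<lambda>u::real. u + 1) at_infinity at_top"
    using filterlim_tendsto_add_at_top[OF tendsto_const filterlim_ident, of 1]
    by (simp add: add.commute filterlim_at_top_imp_at_infinity)
  then have "((\<lambda>u::real. - 1 / (u + 1)) \<longlongrightarrow> 0) at_top"
    by (intro tendsto_divide_0[OF tendsto_const])
  then have "set_integrable lborel (einterval 0 \<infinity>) (\<lambda>u::real. 1 / (u + 1)^2)"
    by (intro interval_integral_FTC_nonneg(1)[where F = "\<lambda>u. - 1 / (u + 1)" and A = "-1" and B = 0])
       (auto intro!: derivative_eq_intros continuous_intros tendsto_eq_intros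
             simp: ereal_tendsto_simps power2_eq_square zero_ereal_def)
  then show ?thesis
    by (simp add: zero_ereal_def)
qed

lemma integrable_Ioi_inverse_square_bound:
  fixes f :: "real \<Rightarrow> 'a::euclidean_space"
  assumes "continuous_on {0<..} f" and bound: "\<And>u. u > 0 \<Longrightarrow> norm (f u) \<le> K / (u + 1)^2"
  shows "set_integrable lborel {0<..} f" and "f integrable_on {0<..}"
    and "norm (integral {0<..} f) \<le> K * integral {0<..} (\<lambda>u::real. 1 / (u + 1)^2)"
proof -
  show "set_integrable lborel {0<..} f"
  proof (rule set_integrable_bound)
    show "set_integrable lborel {0<..} (\<lambda>u::real. K * (1 / (u + 1)^2))"
      using set_integrable_inverse_square_Ioi by (rule set_integrable_mult_right)
    show "set_borel_measurable lborel {0<..} f"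
      unfolding set_borel_measurable_def
      using borel_measurable_continuous_on_indicator[OF _ assms(1)] by simp
    show "AE u in lborel. u \<in> {0<..} \<longrightarrow> norm (f u) \<le> norm (K * (1 / (u + 1)^2))"
      using bound by (intro AE_I2) (auto intro: order_trans[OF _ divide_right_mono[OF abs_ge_self]])
  qed
  then show "f integrable_on {0<..}"
    by (rule set_borel_integral_eq_integral(1))
  have "norm (integral {0<..} f) \<le> integral {0<..} (\<lambda>u::real. K * (1 / (u + 1)^2))"
    using \<open>f integrable_on {0<..}\<close> bound
      integrable_on_mult_right[OF
        set_borel_integral_eq_integral(1)[OF set_integrable_inverse_square_Ioi]]
    by (intro integral_norm_bound_integral) auto
  then show "norm (integral {0<..} f) \<le> K * integral {0<..} (\<lambda>u::real. 1 / (u + 1)^2)"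
    by (simp only: integral_mult_right)
qed

lemma integrable_Ioi_div_linear_growth:
  fixes \<phi> D :: "real \<Rightarrow> complex"
  assumes "continuous_on {0<..} \<phi>" "continuous_on {0<..} D"
    and "c > 0" "\<And>u. u > 0 \<Longrightarrow> c * (u + 1) \<le> norm (D u)"
    and "\<And>u. u > 0 \<Longrightarrow> norm (\<phi> u) \<le> M / (u + 1)"
  shows "(\<lambda>u. \<phi> u / D u) integrable_on {0<..}"
proof (rule integrable_Ioi_inverse_square_bound(2)[where K = "M / c"])
  have "D u \<noteq> 0" if "u > 0" for u
    using assms(4)[OF that] mult_pos_pos[OF \<open>c > 0\<close>, of "u + 1"] that by auto
  then show "continuous_on {0<..} (\<lambda>u. \<phi> u / D u)"
    by (intro continuous_intros assms(1,2)) auto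
  fix u :: real assume "u > 0"
  have "norm (\<phi> u / D u) \<le> (M / (u + 1)) / (c * (u + 1))"
    unfolding norm_divide using assms(4,5)[OF \<open>u > 0\<close>] \<open>u > 0\<close> \<open>c > 0\<close>
    by (intro frac_le) (auto intro: order_trans[OF norm_ge_zero])
  then show "norm (\<phi> u / D u) \<le> M / c / (u + 1)^2"
    by (simp add: power2_eq_square mult_ac)
qed

lemma integrable_Ioi_div_square_linear_growth:
  fixes \<phi> D :: "real \<Rightarrow> complex"
  assumes "continuous_on {0<..} \<phi>" "continuous_on {0<..} D"
    and "c > 0" "\<And>u. u > 0 \<Longrightarrow> c * (u + 1) \<le> norm (D u)"
    and "\<And>u. u > 0 \<Longrightarrow> norm (\<phi> u) \<le> M"
  shows "set_integrable lborel {0<..} (\<lambda>u. \<phi> u / (D u)^2)"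
    and "(\<lambda>u. \<phi> u / (D u)^2) integrable_on {0<..}"
proof -
  have "D u \<noteq> 0" if "u > 0" for u
    using assms(4)[OF that] mult_pos_pos[OF \<open>c > 0\<close>, of "u + 1"] that by auto
  then have "continuous_on {0<..} (\<lambda>u. \<phi> u / (D u)^2)"
    by (intro continuous_intros assms(1,2)) auto
  moreover have "norm (\<phi> u / (D u)^2) \<le> M / c^2 / (u + 1)^2" if "u > 0" for u
  proof -
    have "norm (\<phi> u / (D u)^2) \<le> M / (c * (u + 1))^2"
      unfolding norm_divide norm_power using assms(4,5)[OF that] that \<open>c > 0\<close>
      by (intro frac_le power_mono) (auto intro: order_trans[OF norm_ge_zero])
    then show ?thesis
      by (simp add: power_mult_distrib)
  qed
  ultimately show "set_integrable lborel {0<..} (\<lambda>u. \<phi> u / (D u)^2)"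
    and "(\<lambda>u. \<phi> u / (D u)^2) integrable_on {0<..}"
    using integrable_Ioi_inverse_square_bound by blast+
qed

lemma inverse_difference_quotient_remainder:
  fixes a b h p f :: "'a::field"
  assumes "a \<noteq> 0" "b \<noteq> 0" "h \<noteq> 0" "a = b + h * p"
  shows "(f / a - f / b) / h + f * p / b^2 = f * p^2 * h / (a * b^2)"
proof -
  have "(f / a - f / b) / h + f * p / b^2 = f * ((b - a) * b + p * h * a) / (h * a * b^2)"
    using assms(1-3) by (simp add: field_simps power2_eq_square)
  also have "(b - a) * b + p * h * a = p^2 * h * h"
    using assms(4) by (simp add: algebra_simps power2_eq_square)
  finally show ?thesis
    using assms(3) by (simp add: field_simps power2_eq_square)
qed

lemma affine_perturbation_lower_bound:
  fixes D \<psi> :: "real \<Rightarrow> 'a::real_normed_field"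
  assumes "c > 0" and D: "\<And>u. u > 0 \<Longrightarrow> c * (u + 1) \<le> norm (D u)"
    and \<psi>: "\<And>u. u > 0 \<Longrightarrow> norm (\<psi> u) \<le> K * (u + 1)"
  obtains \<delta> where "\<delta> > 0"
    and "\<And>x u. norm (x - a) < \<delta> \<Longrightarrow> u > 0 \<Longrightarrow> c / 2 * (u + 1) \<le> norm (D u + (x - a) * \<psi> u)"
proof -
  define \<delta> where "\<delta> = c / (2 * (\<bar>K\<bar> + 1))"
  have "\<delta> > 0"
    using \<open>c > 0\<close> by (simp add: \<delta>_def)
  moreover have "c / 2 * (u + 1) \<le> norm (D u + (x - a) * \<psi> u)"
    if x: "norm (x - a) < \<delta>" and u: "u > 0" for x and u :: real
  proof -
    have "norm (\<psi> u) \<le> (\<bar>K\<bar> + 1) * (u + 1)"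
      using \<psi>[OF u] u by (smt (verit, best) mult_right_mono)
    then have "norm ((x - a) * \<psi> u) \<le> \<delta> * ((\<bar>K\<bar> + 1) * (u + 1))"
      unfolding norm_mult using x \<open>\<delta> > 0\<close> by (intro mult_mono) auto
    also have "\<dots> = c / 2 * (u + 1)"
      by (simp add: \<delta>_def field_simps)
    finally show ?thesis
      using D[OF u] norm_triangle_ineq4[of "D u + (x - a) * \<psi> u" "(x - a) * \<psi> u"] by simp
  qed
  ultimately show ?thesis
    using that by blast
qed

lemma has_field_derivative_by_quotient_bound:
  fixes F :: "'a::real_normed_field \<Rightarrow> 'a"
  assumes "\<delta> > 0"
    and "\<And>x. norm (x - a) < \<delta> \<Longrightarrow> x \<noteq> a \<Longrightarrow> norm ((F x - F a) / (x - a) - F') \<le> E * norm (x - a)"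
  shows "(F has_field_derivative F') (at a)"
proof -
  have "((\<lambda>x. (F x - F a) / (x - a) - F') \<longlongrightarrow> 0) (at a)"
  proof (rule Lim_null_comparison)
    show "\<forall>\<^sub>F x in at a. norm ((F x - F a) / (x - a) - F') \<le> E * norm (x - a)"
      using assms by (auto simp: eventually_at dist_norm intro!: exI[of _ \<delta>])
    show "((\<lambda>x. E * norm (x - a)) \<longlongrightarrow> 0) (at a)"
      by (intro tendsto_mult_right_zero tendsto_norm_zero LIM_zero tendsto_ident_at)
  qed
  then show ?thesis
    by (simp add: has_field_derivative_iff LIM_zero_cancel)
qed

lemma norm_inverse_affine_remainder_le:
  fixes \<phi> \<psi> D E h :: "'a::real_normed_field"
  assumes "norm \<phi> \<le> M / v" "norm \<psi> \<le> K * v" "c * v \<le> norm D" "c / 2 * v \<le> norm E"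
    and "c > 0" "v > 0" "M \<ge> 0" "K \<ge> 0"
  shows "norm (\<phi> * \<psi>^2 * h / (E * D^2)) \<le> norm h * (2 * M * K^2 / c^3) / v^2"
proof -
  have "norm (\<phi> * \<psi>^2 * h / (E * D^2)) \<le> (M / v * (K * v)^2 * norm h) / (c / 2 * v * (c * v)^2)"
    unfolding norm_divide norm_mult norm_power using assms
    by (intro frac_le mult_mono power_mono mult_nonneg_nonneg) auto
  also have "\<dots> = norm h * (2 * M * K^2 / c^3) / v^2"
    using assms(5,6) by (simp add: divide_simps power2_eq_square power3_eq_cube)
  finally show ?thesis .
qed

lemma has_field_derivative_integral_inverse_affine:
  fixes \<phi> \<psi> D :: "real \<Rightarrow> complex"
  assumes cont: "continuous_on {0<..} \<phi>" "continuous_on {0<..} \<psi>" "continuous_on {0<..} D"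
    and "c > 0" and D: "\<And>u. u > 0 \<Longrightarrow> c * (u + 1) \<le> norm (D u)"
    and \<phi>: "\<And>u. u > 0 \<Longrightarrow> norm (\<phi> u) \<le> M / (u + 1)"
    and \<psi>: "\<And>u. u > 0 \<Longrightarrow> norm (\<psi> u) \<le> K * (u + 1)"
  shows "((\<lambda>x. integral {0<..} (\<lambda>u. \<phi> u / (D u + (x - a) * \<psi> u))) has_field_derivative
          - integral {0<..} (\<lambda>u. \<phi> u * \<psi> u / (D u)^2)) (at a)"
proof -
  obtain \<delta> where "\<delta> > 0" and Dx_bound:
      "\<And>x u. norm (x - a) < \<delta> \<Longrightarrow> u > 0 \<Longrightarrow> c / 2 * (u + 1) \<le> norm (D u + (x - a) * \<psi> u)"
    using affine_perturbation_lower_bound[OF \<open>c > 0\<close> D \<psi>, where a = a] by blast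
  define Dx where "Dx x u = D u + (x - a) * \<psi> u" for x u
  define F where "F = (\<lambda>x. integral {0<..} (\<lambda>u. \<phi> u / Dx x u))"
  define F' where "F' = - integral {0<..} (\<lambda>u. \<phi> u * \<psi> u / (D u)^2)"
  define B where "B = 2 * M * K^2 / c^3"
  have "M \<ge> 0" "K \<ge> 0"
    using order_trans[OF norm_ge_zero \<phi>[of 1]] order_trans[OF norm_ge_zero \<psi>[of 1]] by simp_all
  have nonzero: "Dx x u \<noteq> 0" "D u \<noteq> 0" if "norm (x - a) < \<delta>" "u > 0" for x u
    using Dx_bound[OF that] D[OF that(2)] mult_pos_pos[OF \<open>c > 0\<close>, of "u + 1"] that(2)
    unfolding Dx_def by auto
  have integrable_F: "(\<lambda>u. \<phi> u / Dx x u) integrable_on {0<..}" if "norm (x - a) < \<delta>" for x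
    using \<open>c > 0\<close> Dx_bound[OF that] \<phi> unfolding Dx_def
    by (intro integrable_Ioi_div_linear_growth[where c = "c / 2"] cont continuous_intros) auto
  have integrable_F': "(\<lambda>u. \<phi> u * \<psi> u / (D u)^2) integrable_on {0<..}"
  proof (rule integrable_Ioi_div_square_linear_growth(2)[OF _ cont(3) \<open>c > 0\<close> D])
    show "continuous_on {0<..} (\<lambda>u. \<phi> u * \<psi> u)"
      by (intro continuous_intros cont)
    show "norm (\<phi> u * \<psi> u) \<le> M * K" if "u > 0" for u
      using mult_mono[OF \<phi>[OF that] \<psi>[OF that]] that \<open>M \<ge> 0\<close> by (simp add: norm_mult)
  qed
  have "norm ((F x - F a) / (x - a) - F')
      \<le> B * integral {0<..} (\<lambda>u::real. 1 / (u + 1)^2) * norm (x - a)"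
    if x: "norm (x - a) < \<delta>" "x \<noteq> a" for x
  proof -
    define r where "r u = \<phi> u * (\<psi> u)^2 * (x - a) / (Dx x u * (D u)^2)" for u
    have r_bound: "norm (r u) \<le> norm (x - a) * B / (u + 1)^2" if "u > 0" for u
      unfolding r_def B_def Dx_def using that \<open>c > 0\<close> \<open>M \<ge> 0\<close> \<open>K \<ge> 0\<close>
      by (intro norm_inverse_affine_remainder_le \<phi>[OF that] \<psi>[OF that] D[OF that]
          Dx_bound[OF x(1) that]) auto
    have "(F x - F a) / (x - a) - F'
        = integral {0<..} (\<lambda>u. (\<phi> u / Dx x u - \<phi> u / Dx a u) / (x - a) + \<phi> u * \<psi> u / (D u)^2)"
      unfolding F_def F'_def using integrable_F[OF x(1)] integrable_F[of a] \<open>\<delta> > 0\<close> integrable_F'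
      by (simp add: integral_add integral_diff integrable_diff integrable_on_divide)
    also have "\<dots> = integral {0<..} r"
      using nonzero[OF x(1)] x(2)
      by (intro integral_cong) (simp add: r_def Dx_def inverse_difference_quotient_remainder)
    finally have quotient_eq: "(F x - F a) / (x - a) - F'
        = integral {0<..} r" .
    have "continuous_on {0<..} r"
      unfolding r_def Dx_def using nonzero[OF x(1)] unfolding Dx_def
      by (intro continuous_intros cont) auto
    then show ?thesis
      unfolding quotient_eq using integrable_Ioi_inverse_square_bound(3)[OF _ r_bound]
      by (simp add: mult_ac)
  qed
  then have "(F has_field_derivative F') (at a)"
    by (intro has_field_derivative_by_quotient_bound[OF \<open>\<delta> > 0\<close>])
  then show ?thesis
    by (simp add: F_def F'_def Dx_def)
qed

lemma ray_eq: "ray Z = {\<i> * Z * of_real u | u. u > 0}"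
proof -
  have "(\<exists>s>0. x = \<i> * Z / of_real s) \<longleftrightarrow> (\<exists>u>0. x = \<i> * Z * of_real u)" for x
  proof
    assume "\<exists>s>0. x = \<i> * Z / of_real s"
    then show "\<exists>u>0. x = \<i> * Z * of_real u"
      by (metis divide_inverse inverse_positive_iff_positive of_real_inverse)
  next
    assume "\<exists>u>0. x = \<i> * Z * of_real u"
    then show "\<exists>s>0. x = \<i> * Z / of_real s"
      by (metis divide_inverse inverse_inverse_eq inverse_positive_iff_positive of_real_inverse)
  qed
  then show ?thesis
    unfolding ray_def by blast
qed

lemma norm_of_real_minus_lower_bound:
  fixes r :: complex
  assumes "\<And>u. u \<ge> 0 \<Longrightarrow> r \<noteq> of_real u"
  obtains c where "c > 0" "\<And>u. u \<ge> 0 \<Longrightarrow> c * (u + 1) \<le> norm (of_real u - r)"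
proof -
  define e where "e = (if Im r = 0 then - Re r else \<bar>Im r\<bar>)"
  have "e > 0"
  proof (cases "Im r = 0")
    case True
    then have "r = of_real (Re r)"
      by (simp add: complex_eq_iff)
    then have "Re r < 0"
      using assms[of "Re r"] by linarith
    then show ?thesis
      using True by (simp add: e_def)
  qed (simp add: e_def)
  have e_le: "e \<le> norm (of_real u - r)" if "u \<ge> 0" for u
    using that abs_Re_le_cmod[of "of_real u - r"] abs_Im_le_cmod[of "of_real u - r"]
    by (auto simp: e_def)
  show ?thesis
  proof
    show "1 / (1 + (norm r + 1) / e) > 0"
      using \<open>e > 0\<close> by (simp add: add_pos_nonneg)
    fix u :: real assume "u \<ge> 0"
    have "u \<le> norm (of_real u - r) + norm r"
      using norm_triangle_ineq2[of "of_real u" r] \<open>u \<ge> 0\<close> by simp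
    moreover have "1 \<le> norm (of_real u - r) / e"
      using e_le[OF \<open>u \<ge> 0\<close>] \<open>e > 0\<close> by simp
    then have "norm r + 1 \<le> (norm r + 1) * (norm (of_real u - r) / e)"
      by (metis mult.right_neutral mult_left_mono add_nonneg_nonneg norm_ge_zero zero_le_one)
    ultimately have "u + 1 \<le> norm (of_real u - r) * (1 + (norm r + 1) / e)"
      by (simp add: algebra_simps)
    then show "1 / (1 + (norm r + 1) / e) * (u + 1) \<le> norm (of_real u - r)"
      using \<open>e > 0\<close> by (simp add: pos_divide_le_eq add_pos_nonneg)
  qed
qed

lemma ray_denominator_lower_bound:
  fixes Z t :: complex
  assumes "Z \<noteq> 0" "t \<noteq> 0" "t \<notin> ray Z"
  obtains c where "c > 0" "\<And>u. u \<ge> 0 \<Longrightarrow> c * (u + 1) \<le> norm (\<i> * Z * of_real u - t)"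
proof -
  define r where "r = t / (\<i> * Z)"
  have norm_eq: "norm (\<i> * Z * of_real u - t) = norm Z * norm (of_real u - r)" for u
  proof -
    have "\<i> * Z * of_real u - t = \<i> * Z * (of_real u - r)"
      using \<open>Z \<noteq> 0\<close> by (simp add: r_def algebra_simps)
    then show ?thesis
      by (simp add: norm_mult)
  qed
  have "r \<noteq> of_real u" if "u \<ge> 0" for u
  proof
    assume "r = of_real u"
    then have "t = \<i> * Z * of_real u"
      using \<open>Z \<noteq> 0\<close> by (simp add: r_def field_simps)
    then show False
      using assms that by (cases "u = 0") (auto simp: ray_eq)
  qed
  then obtain c where "c > 0" and c: "\<And>u. u \<ge> 0 \<Longrightarrow> c * (u + 1) \<le> norm (of_real u - r)"
    using norm_of_real_minus_lower_bound by metis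
  show ?thesis
  proof
    show "norm Z * c > 0"
      using \<open>Z \<noteq> 0\<close> \<open>c > 0\<close> by simp
    show "norm Z * c * (u + 1) \<le> norm (\<i> * Z * of_real u - t)" if "u \<ge> 0" for u
      using mult_left_mono[OF c[OF that] norm_ge_zero[of Z]] unfolding norm_eq by (simp add: mult.assoc)
  qed
qed

text \<open>On the ray \<open>t' = \<i> Z u\<close> the semi-flat factor \<open>exp (- 2 \<pi> \<i> Z / t')\<close> becomes \<open>ray_decay u\<close>,
  independently of \<open>Z\<close>.\<close>

definition ray_decay :: "real \<Rightarrow> real" where
  "ray_decay u = exp (- 2 * pi / u)"

lemma continuous_on_ray_decay: "continuous_on {0<..} ray_decay"
  unfolding ray_decay_def by (intro continuous_intros) auto

lemma ray_decay_bounds: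
  assumes "u > 0"
  shows "0 < ray_decay u" "ray_decay u \<le> 1" "ray_decay u \<le> u" "ray_decay u \<le> u^2"
proof -
  define i where "i = inverse (exp (pi / u))"
  have "1 / u < pi / u"
    using assms pi_gt3 by (simp add: divide_strict_right_mono)
  also have "\<dots> \<le> exp (pi / u)"
    using exp_ge_add_one_self[of "pi / u"] by linarith
  finally have "i < u"
    using assms by (simp add: i_def inverse_eq_divide divide_less_eq mult.commute)
  moreover have "0 < i" "i \<le> 1"
    using assms by (simp_all add: i_def inverse_le_1_iff)
  moreover have "i^2 \<le> i"
    using \<open>0 < i\<close> \<open>i \<le> 1\<close> by (simp add: power2_eq_square mult_right_le_one_le)
  moreover have "ray_decay u = i^2"
    by (simp add: ray_decay_def i_def power2_eq_square exp_minus[symmetric] exp_add[symmetric])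
  ultimately show "0 < ray_decay u" "ray_decay u \<le> 1" "ray_decay u \<le> u" "ray_decay u \<le> u^2"
    using power_mono[of i u 2] by simp_all
qed

lemma ray_decay_weight_bounds:
  assumes "u > 0"
  shows "\<bar>ray_decay u\<bar> \<le> 1" "\<bar>ray_decay u / u\<bar> \<le> 1" "\<bar>ray_decay u / u\<bar> \<le> 2 / (u + 1)"
    and "\<bar>(1 + 2 * pi / u) * ray_decay u\<bar> \<le> 1 + 2 * pi"
    and "\<bar>(1 + 2 * pi / u) * ray_decay u / u\<bar> \<le> (2 + 4 * pi) / (u + 1)"
proof -
  define d where "d = ray_decay u"
  have d: "0 < d" "d \<le> 1" "d / u \<le> 1" "d / u^2 \<le> 1"
    using ray_decay_bounds[OF assms] assms by (simp_all add: d_def)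
  have "(1 + 2 * pi / u) * d = d + 2 * pi * (d / u)"
    using assms by (simp add: field_simps)
  also have "\<dots> \<le> 1 + 2 * pi * 1"
    using d by (intro add_mono mult_left_mono) auto
  finally have weight: "(1 + 2 * pi / u) * d \<le> 1 + 2 * pi"
    by simp
  have "d / u * (u + 1) = d + d / u"
    using assms by (simp add: field_simps)
  then have "d / u * (u + 1) \<le> 2"
    using d by linarith
  then have weight_div: "d / u \<le> 2 / (u + 1)"
    using assms by (simp add: le_divide_eq)
  have "(1 + 2 * pi / u) * d / u * (u + 1) = d + d / u + 2 * pi * (d / u) + 2 * pi * (d / u^2)"
    using assms by (simp add: field_simps power2_eq_square)
  also have "\<dots> \<le> 1 + 1 + 2 * pi * 1 + 2 * pi * 1"
    using d by (intro add_mono mult_left_mono) auto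
  finally have "(1 + 2 * pi / u) * d / u \<le> (2 + 4 * pi) / (u + 1)"
    using assms by (simp add: le_divide_eq)
  with d weight weight_div assms show
    "\<bar>ray_decay u\<bar> \<le> 1" "\<bar>ray_decay u / u\<bar> \<le> 1" "\<bar>ray_decay u / u\<bar> \<le> 2 / (u + 1)"
    "\<bar>(1 + 2 * pi / u) * ray_decay u\<bar> \<le> 1 + 2 * pi"
    "\<bar>(1 + 2 * pi / u) * ray_decay u / u\<bar> \<le> (2 + 4 * pi) / (u + 1)"
    unfolding d_def[symmetric] by simp_all
qed

lemma integrable_Ioi_div_ray_denominator:
  fixes Z t :: complex and \<phi> :: "real \<Rightarrow> complex"
  assumes "Z \<noteq> 0" "t \<noteq> 0" "t \<notin> ray Z" and "continuous_on {0<..} \<phi>"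
    and "\<And>u. u > 0 \<Longrightarrow> norm (\<phi> u) \<le> M / (u + 1)"
  shows "(\<lambda>u. \<phi> u / (\<i> * Z * of_real u - t)) integrable_on {0<..}"
proof -
  obtain c where "c > 0" and c: "\<And>u. u \<ge> 0 \<Longrightarrow> c * (u + 1) \<le> norm (\<i> * Z * of_real u - t)"
    using ray_denominator_lower_bound[OF assms(1-3)] by blast
  show ?thesis
    using c
    by (intro integrable_Ioi_div_linear_growth[OF assms(4) _ \<open>c > 0\<close> _ assms(5)] continuous_intros)
       auto
qed

lemma integrable_Ioi_div_ray_denominator_square:
  fixes Z t :: complex and \<phi> :: "real \<Rightarrow> complex"
  assumes "Z \<noteq> 0" "t \<noteq> 0" "t \<notin> ray Z" and "continuous_on {0<..} \<phi>"
    and "\<And>u. u > 0 \<Longrightarrow> norm (\<phi> u) \<le> M"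
  shows "set_integrable lborel {0<..} (\<lambda>u. \<phi> u / (\<i> * Z * of_real u - t)^2)"
    and "(\<lambda>u. \<phi> u / (\<i> * Z * of_real u - t)^2) integrable_on {0<..}"
proof -
  obtain c where "c > 0" and c: "\<And>u. u \<ge> 0 \<Longrightarrow> c * (u + 1) \<le> norm (\<i> * Z * of_real u - t)"
    using ray_denominator_lower_bound[OF assms(1-3)] by blast
  have "continuous_on {0<..} (\<lambda>u. \<i> * Z * of_real u - t)"
    by (intro continuous_intros)
  from integrable_Ioi_div_square_linear_growth[OF assms(4) this \<open>c > 0\<close> _ assms(5)] c
  show "set_integrable lborel {0<..} (\<lambda>u. \<phi> u / (\<i> * Z * of_real u - t)^2)"
    and "(\<lambda>u. \<phi> u / (\<i> * Z * of_real u - t)^2) integrable_on {0<..}"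
    by auto
qed

lemma ray_exponent:
  fixes Z :: complex
  assumes "Z \<noteq> 0" "u \<noteq> 0"
  shows "2 * pi * \<i> * Z / (\<i> * Z * of_real u) = of_real (2 * pi / u)"
  using assms by (simp add: field_simps)

lemma ray_int_Xsf:
  assumes "Zc z g \<noteq> 0"
  shows "ray_int (Zc z g) (\<lambda>t'. s / (t' - s) * Xsf \<sigma> \<theta> z g t')
    = of_int (\<sigma> g) * exp (2 * pi * \<i> * Zc \<theta> g) * s *
      integral {0<..} (\<lambda>u. of_real (ray_decay u / u) / (\<i> * Zc z g * of_real u - s))"
proof -
  have "Xsf \<sigma> \<theta> z g (\<i> * Zc z g * of_real u)
      = of_int (\<sigma> g) * exp (2 * pi * \<i> * Zc \<theta> g) * of_real (ray_decay u)"
    if "u > 0" for u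
  proof -
    have exponent: "2 * pi * \<i> * (Zc \<theta> g - Zc z g / (\<i> * Zc z g * of_real u))
        = 2 * pi * \<i> * Zc \<theta> g + of_real (- 2 * pi / u)"
      using ray_exponent[OF assms, of u] assms that by (simp add: algebra_simps)
    have "exp (2 * pi * \<i> * (Zc \<theta> g - Zc z g / (\<i> * Zc z g * of_real u)))
        = exp (2 * pi * \<i> * Zc \<theta> g) * of_real (ray_decay u)"
      unfolding exponent ray_decay_def exp_add exp_of_real ..
    then show ?thesis
      by (simp add: Xsf_def)
  qed
  then show ?thesis
    unfolding ray_int_def integral_mult_right[symmetric]
    by (intro integral_cong) (simp add: field_simps)
qed

lemma ray_int_tau:
  fixes Z t :: complex
  assumes "Z \<noteq> 0"
  shows "ray_int Z (\<lambda>t'. t / (t' - t) * (1 + 2 * pi * \<i> * Z / t') * exp (- 2 * pi * \<i> * Z / t'))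
    = t * integral {0<..} (\<lambda>u. of_real ((1 + 2 * pi / u) * ray_decay u / u) / (\<i> * Z * of_real u - t))"
  unfolding ray_int_def integral_mult_right[symmetric]
proof (intro integral_cong)
  fix u :: real assume "u \<in> {0<..}"
  then have exponent: "2 * pi * \<i> * Z / (\<i> * Z * of_real u) = of_real (2 * pi / u)"
    using ray_exponent[OF assms] by simp
  then have negated: "- 2 * pi * \<i> * Z / (\<i> * Z * of_real u) = of_real (- 2 * pi / u)"
    by (metis minus_divide_left mult_minus_left of_real_minus)
  have "exp (- 2 * pi * \<i> * Z / (\<i> * Z * of_real u)) = of_real (ray_decay u)"
    unfolding negated ray_decay_def exp_of_real ..
  moreover have "1 + 2 * pi * \<i> * Z / (\<i> * Z * of_real u) = of_real (1 + 2 * pi / u)"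
    unfolding exponent by simp
  ultimately show "t / (\<i> * Z * of_real u - t) * (1 + 2 * pi * \<i> * Z / (\<i> * Z * of_real u))
      * exp (- 2 * pi * \<i> * Z / (\<i> * Z * of_real u)) / of_real u
    = t * (of_real ((1 + 2 * pi / u) * ray_decay u / u) / (\<i> * Z * of_real u - t))"
    by (simp only: of_real_mult of_real_divide) (simp add: divide_inverse mult_ac)
qed

definition ray_decay_integral :: "complex \<Rightarrow> complex \<Rightarrow> complex" where
  "ray_decay_integral Z t = integral {0<..} (\<lambda>u. of_real (ray_decay u) / (\<i> * Z * of_real u - t)^2)"

lemma has_field_derivative_ray_primitive:
  fixes Z t x :: complex
  assumes "x \<noteq> 0" "\<i> * Z * x - t \<noteq> 0"
  shows "((\<lambda>x. x * exp (- 2 * pi / x) / (\<i> * Z * x - t)) has_field_derivative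
      exp (- 2 * pi / x) * (2 * pi * \<i> * Z - t * (1 + 2 * pi / x)) / (\<i> * Z * x - t)^2) (at x)"
  using assms by (auto intro!: derivative_eq_intros simp: field_simps power2_eq_square)

lemma has_vector_derivative_ray_primitive:
  fixes Z t :: complex
  assumes "u > 0" "\<i> * Z * of_real u - t \<noteq> 0"
  shows "((\<lambda>v. of_real v * of_real (ray_decay v) / (\<i> * Z * of_real v - t)) has_vector_derivative
      2 * pi * \<i> * Z * (of_real (ray_decay u) / (\<i> * Z * of_real u - t)^2)
      - t * (of_real ((1 + 2 * pi / u) * ray_decay u) / (\<i> * Z * of_real u - t)^2)) (at u)"
proof -
  have decay: "exp (- 2 * pi / complex_of_real v) = complex_of_real (ray_decay v)" for v
    by (simp add: ray_decay_def exp_of_real[symmetric])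
  have "(\<lambda>v. of_real v * of_real (ray_decay v) / (\<i> * Z * of_real v - t))
      = (\<lambda>v. complex_of_real v * exp (- 2 * pi / complex_of_real v) / (\<i> * Z * complex_of_real v - t))"
    unfolding decay ..
  moreover have "2 * pi * \<i> * Z * (of_real (ray_decay u) / (\<i> * Z * of_real u - t)^2)
      - t * (of_real ((1 + 2 * pi / u) * ray_decay u) / (\<i> * Z * of_real u - t)^2)
    = exp (- 2 * pi / complex_of_real u) * (2 * pi * \<i> * Z - t * (1 + 2 * pi / complex_of_real u))
      / (\<i> * Z * complex_of_real u - t)^2"
    unfolding decay by (simp add: diff_divide_distrib algebra_simps)
  ultimately show ?thesis
    using has_vector_derivative_real_field[OF has_field_derivative_ray_primitive[of "complex_of_real u" Z t]]
      assms
    by simp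
qed

lemma tendsto_ray_primitive_at_right_0:
  fixes Z t :: complex
  assumes "Z \<noteq> 0" "t \<noteq> 0" "t \<notin> ray Z"
  shows "((\<lambda>u. of_real u * of_real (ray_decay u) / (\<i> * Z * of_real u - t)) \<longlongrightarrow> 0) (at_right 0)"
proof -
  obtain c where "c > 0" and c: "\<And>u. u \<ge> 0 \<Longrightarrow> c * (u + 1) \<le> norm (\<i> * Z * of_real u - t)"
    using ray_denominator_lower_bound[OF assms] by blast
  have "\<forall>\<^sub>F u in at_right 0. norm (of_real u * of_real (ray_decay u) / (\<i> * Z * of_real u - t)) \<le> u / c"
    using eventually_at_right_less[of "0::real"]
  proof eventually_elim
    case (elim u)
    have "norm (of_real u * of_real (ray_decay u) / (\<i> * Z * of_real u - t)) \<le> (u * 1) / (c * (u + 1))"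
      unfolding norm_divide norm_mult using elim ray_decay_bounds[of u] c[of u] \<open>c > 0\<close>
      by (intro frac_le mult_left_mono) auto
    also have "\<dots> \<le> u / c"
      using elim \<open>c > 0\<close> by (simp add: divide_simps)
    finally show ?case .
  qed
  moreover have "((\<lambda>u. u / c) \<longlongrightarrow> 0) (at_right 0)"
    using \<open>c > 0\<close> by (auto intro!: tendsto_eq_intros)
  ultimately show ?thesis
    by (rule Lim_null_comparison)
qed

lemma tendsto_ray_primitive_at_top:
  fixes Z t :: complex
  assumes "Z \<noteq> 0"
  shows "((\<lambda>u. of_real u * of_real (ray_decay u) / (\<i> * Z * of_real u - t)) \<longlongrightarrow> - \<i> / Z) at_top"
proof -
  have inverse_0: "((\<lambda>u::real. 1 / u) \<longlongrightarrow> 0) at_top"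
    by (intro tendsto_divide_0[OF tendsto_const] filterlim_at_top_imp_at_infinity filterlim_ident)
  have "((\<lambda>u. exp (- 2 * pi * (1 / u))) \<longlongrightarrow> exp (- 2 * pi * 0)) at_top"
    by (intro tendsto_intros inverse_0)
  then have decay_limit: "(ray_decay \<longlongrightarrow> 1) at_top"
    by (simp add: ray_decay_def[abs_def])
  have "((\<lambda>u. complex_of_real (ray_decay u) / (\<i> * Z - t * complex_of_real (1 / u)))
      \<longlongrightarrow> complex_of_real 1 / (\<i> * Z - t * complex_of_real 0)) at_top"
    using \<open>Z \<noteq> 0\<close> by (intro tendsto_intros decay_limit inverse_0) auto
  then have "((\<lambda>u. of_real (ray_decay u) / (\<i> * Z - t * of_real (1 / u))) \<longlongrightarrow> 1 / (\<i> * Z)) at_top"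
    by simp
  moreover have "\<forall>\<^sub>F u in at_top. of_real (ray_decay u) / (\<i> * Z - t * of_real (1 / u))
      = of_real u * of_real (ray_decay u) / (\<i> * Z * of_real u - t)"
    using eventually_gt_at_top[of 0] by eventually_elim (simp add: field_simps)
  moreover have "1 / (\<i> * Z) = - \<i> / Z"
    by (simp add: divide_simps)
  ultimately show ?thesis
    using tendsto_cong by force
qed

lemma ray_decay_integral_by_parts:
  fixes Z t :: complex
  assumes "Z \<noteq> 0" "t \<noteq> 0" "t \<notin> ray Z"
  shows "t * integral {0<..} (\<lambda>u. of_real ((1 + 2 * pi / u) * ray_decay u) / (\<i> * Z * of_real u - t)^2)
       = 2 * pi * \<i> * Z * ray_decay_integral Z t + \<i> / Z"
proof -
  define D where "D u = \<i> * Z * of_real u - t" for u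
  define e where "e u = of_real (ray_decay u) / (D u)^2" for u
  define w where "w u = of_real ((1 + 2 * pi / u) * ray_decay u) / (D u)^2" for u
  define f where "f u = 2 * pi * \<i> * Z * e u - t * w u" for u
  have D_nonzero: "D u \<noteq> 0" if "u \<ge> 0" for u
    using assms that by (auto simp: D_def ray_eq)
  have bound_e: "norm (complex_of_real (ray_decay u)) \<le> 1" if "u > 0" for u
    unfolding norm_of_real using ray_decay_weight_bounds(1)[OF that] .
  have integrable_e: "set_integrable lborel {0<..} e" "e integrable_on {0<..}"
    unfolding e_def[abs_def] D_def
    using integrable_Ioi_div_ray_denominator_square[OF assms
        continuous_on_of_real[OF continuous_on_ray_decay] bound_e]
    by auto
  have bound_w: "norm (complex_of_real ((1 + 2 * pi / u) * ray_decay u)) \<le> 1 + 2 * pi" if "u > 0" for u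
    unfolding norm_of_real using ray_decay_weight_bounds(4)[OF that] .
  have "continuous_on {0<..} (\<lambda>u. complex_of_real ((1 + 2 * pi / u) * ray_decay u))"
    by (intro continuous_intros continuous_on_ray_decay) auto
  then have integrable_w: "set_integrable lborel {0<..} w" "w integrable_on {0<..}"
    unfolding w_def[abs_def] D_def using integrable_Ioi_div_ray_denominator_square[OF assms _ bound_w]
    by auto
  have integrable_f: "set_integrable lborel {0<..} f"
    unfolding f_def[abs_def]
    by (intro set_integral_diff(1) set_integrable_mult_right integrable_e integrable_w)
  have primitive: "((\<lambda>v. of_real v * of_real (ray_decay v) / D v) has_vector_derivative f u) (at u)"
    if "u > 0" for u
    unfolding f_def e_def w_def D_def
    by (rule has_vector_derivative_ray_primitive[OF that])
       (use D_nonzero[of u] that in \<open>simp add: D_def\<close>)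
  have "continuous_on {0<..} f"
    unfolding f_def e_def w_def using D_nonzero unfolding D_def
    by (intro continuous_intros continuous_on_ray_decay) auto
  then have "(LBINT u=ereal 0..\<infinity>. f u) = - \<i> / Z - 0"
    using primitive integrable_f
      tendsto_ray_primitive_at_right_0[OF assms] tendsto_ray_primitive_at_top[OF \<open>Z \<noteq> 0\<close>]
    by (intro interval_integral_FTC_integrable[where F = "\<lambda>v. of_real v * of_real (ray_decay v) / D v"])
       (auto simp: D_def continuous_on_eq_continuous_at ereal_tendsto_simps zero_ereal_def)
  moreover have "(LBINT u=ereal 0..\<infinity>. f u) = integral {0<..} f"
    using interval_integral_eq_integral'[of "ereal 0" \<infinity> f] integrable_f by simp
  moreover have "integral {0<..} f = 2 * pi * \<i> * Z * integral {0<..} e - t * integral {0<..} w"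
    unfolding f_def[abs_def]
    using integral_diff[OF integrable_on_mult_right[OF integrable_e(2)]
        integrable_on_mult_right[OF integrable_w(2)]]
    by (simp add: integral_mult_right)
  ultimately have "t * integral {0<..} w = 2 * pi * \<i> * Z * integral {0<..} e + \<i> / Z"
    by (simp add: algebra_simps)
  then show ?thesis
    unfolding w_def[abs_def] e_def[abs_def] D_def ray_decay_integral_def .
qed

lemma ray_decay_integral_partial_fractions:
  fixes Z t :: complex
  assumes "Z \<noteq> 0" "t \<noteq> 0" "t \<notin> ray Z"
  shows "integral {0<..} (\<lambda>u. of_real (ray_decay u / u) / (\<i> * Z * of_real u - t))
       + t * integral {0<..} (\<lambda>u. of_real (ray_decay u / u) / (\<i> * Z * of_real u - t)^2)
     = \<i> * Z * ray_decay_integral Z t"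
proof -
  define \<phi> where "\<phi> u = complex_of_real (ray_decay u / u)" for u
  define D where "D u = \<i> * Z * of_real u - t" for u
  have cont: "continuous_on {0<..} \<phi>"
    unfolding \<phi>_def[abs_def] by (intro continuous_intros continuous_on_ray_decay) auto
  have bounds: "norm (\<phi> u) \<le> 2 / (u + 1)" "norm (\<phi> u) \<le> 1" if "u > 0" for u
    unfolding \<phi>_def norm_of_real using ray_decay_weight_bounds(2,3)[OF that] by simp_all
  have "(\<lambda>u. \<phi> u / D u) integrable_on {0<..}"
    unfolding D_def by (rule integrable_Ioi_div_ray_denominator[OF assms cont bounds(1)])
  moreover have "(\<lambda>u. \<phi> u / (D u)^2) integrable_on {0<..}"
    unfolding D_def by (rule integrable_Ioi_div_ray_denominator_square(2)[OF assms cont bounds(2)])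
  ultimately have "integral {0<..} (\<lambda>u. \<phi> u / D u) + t * integral {0<..} (\<lambda>u. \<phi> u / (D u)^2)
      = integral {0<..} (\<lambda>u. \<phi> u / D u + t * (\<phi> u / (D u)^2))"
    by (simp add: integral_add integral_mult_right integrable_on_mult_right del: times_divide_eq_right)
  also have "\<dots> = integral {0<..} (\<lambda>u. \<i> * Z * (of_real (ray_decay u) / (D u)^2))"
  proof (rule integral_cong)
    fix u :: real assume "u \<in> {0<..}"
    then have "D u \<noteq> 0" "complex_of_real u \<noteq> 0"
      using assms by (auto simp: D_def ray_eq)
    have "\<phi> u / D u + t * (\<phi> u / (D u)^2) = \<phi> u * (D u + t) / (D u)^2"
      using \<open>D u \<noteq> 0\<close> by (simp add: field_simps power2_eq_square)
    also have "D u + t = \<i> * Z * of_real u"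
      by (simp add: D_def)
    finally show "\<phi> u / D u + t * (\<phi> u / (D u)^2) = \<i> * Z * (of_real (ray_decay u) / (D u)^2)"
      using \<open>complex_of_real u \<noteq> 0\<close> by (simp add: \<phi>_def field_simps)
  qed
  also have "\<dots> = \<i> * Z * ray_decay_integral Z t"
    unfolding ray_decay_integral_def D_def by (rule integral_mult_right)
  finally show ?thesis
    unfolding \<phi>_def D_def .
qed

lemma has_field_derivative_continuous_log:
  fixes l h :: "complex \<Rightarrow> complex"
  assumes "open V" "a \<in> V" and exp_l: "\<And>w. w \<in> V \<Longrightarrow> exp (l w) = h w"
    and h: "(h has_field_derivative h') (at a)" "h a \<noteq> 0" and "isCont l a"
  shows "(l has_field_derivative h' / h a) (at a)"
proof -
  define M where "M w = Ln (h w / h a) + l a" for w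
  have Ln_derivative:
    "((\<lambda>w. Ln (h w / h a)) has_field_derivative inverse (h a / h a) * (h' / h a)) (at a)"
    using h by (intro DERIV_chain'[OF DERIV_cdivide[OF h(1)]] has_field_derivative_Ln) auto
  have M_derivative: "(M has_field_derivative h' / h a) (at a)"
    unfolding M_def[abs_def] using DERIV_add[OF Ln_derivative DERIV_const[of "l a"]] h(2) by simp
  have "isCont (\<lambda>w. l w - M w) a"
    using \<open>isCont l a\<close> DERIV_isCont[OF M_derivative] by (intro continuous_intros)
  moreover have "l a - M a = 0"
    using h(2) by (simp add: M_def)
  ultimately have "((\<lambda>w. l w - M w) \<longlongrightarrow> 0) (nhds a)"
    using tendsto_at_iff_tendsto_nhds[of "\<lambda>w. l w - M w" a] unfolding isCont_def by simp
  then have "\<forall>\<^sub>F w in nhds a. norm (l w - M w) < 2 * pi"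
    by (intro order_tendstoD(2)[OF tendsto_norm_zero]) auto
  moreover have "\<forall>\<^sub>F w in nhds a. h w \<noteq> 0"
    using DERIV_isCont[OF h(1)] h(2) unfolding isCont_def tendsto_at_iff_tendsto_nhds
    by (rule tendsto_imp_eventually_ne)
  moreover have "\<forall>\<^sub>F w in nhds a. w \<in> V"
    using assms(1,2) by (rule eventually_nhds_in_open)
  \<comment> \<open>\<open>l\<close> and the explicit branch \<open>M\<close> differ by a continuous function with values in \<open>2 \<pi> \<i> \<int>\<close>.\<close>
  ultimately have "\<forall>\<^sub>F w in nhds a. l w = M w"
  proof eventually_elim
    case (elim w)
    have "exp (l w - M w) = 1"
      using elim exp_l[OF elim(3)] exp_l[OF \<open>a \<in> V\<close>] h(2) by (simp add: M_def exp_diff exp_add)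
    then obtain n :: int where "Re (l w - M w) = 0" "Im (l w - M w) = 2 * pi * n"
      by (auto simp: exp_eq_1)
    moreover have "\<bar>Im (l w - M w)\<bar> < 2 * pi"
      using abs_Im_le_cmod[of "l w - M w"] elim(1) by linarith
    ultimately have "n = 0"
      by (simp add: abs_mult)
    with \<open>Re (l w - M w) = 0\<close> \<open>Im (l w - M w) = 2 * pi * n\<close> show ?case
      by (simp add: complex_eq_iff)
  qed
  then show ?thesis
    using M_derivative DERIV_cong_ev[OF refl _ refl] by blast
qed

lemma has_field_derivative_X_term:
  assumes "Zc z g' \<noteq> 0" "t \<noteq> 0" "t \<notin> ray (Zc z g')"
  shows "((\<lambda>s. X_term \<omega> \<sigma> \<Omega> \<theta> z g g' s) has_field_derivative
      of_rat (\<Omega> g') * of_int (pair \<omega> g g') * of_int (\<sigma> g') * exp (2 * pi * \<i> * Zc \<theta> g') *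
      (\<i> * Zc z g' * ray_decay_integral (Zc z g') t)) (at t)"
proof -
  define Z where "Z = Zc z g'"
  define K where "K = of_rat (\<Omega> g') * of_int (pair \<omega> g g') * of_int (\<sigma> g') * exp (2 * pi * \<i> * Zc \<theta> g')"
  define \<phi> where "\<phi> u = complex_of_real (ray_decay u / u)" for u
  define D where "D u = \<i> * Z * of_real u - t" for u
  define H where "H s = integral {0<..} (\<lambda>u. \<phi> u / (\<i> * Z * of_real u - s))" for s
  have ray: "Z \<noteq> 0" "t \<noteq> 0" "t \<notin> ray Z"
    using assms by (simp_all add: Z_def)
  obtain c where "c > 0" and c: "\<And>u. u \<ge> 0 \<Longrightarrow> c * (u + 1) \<le> norm (D u)"
    using ray_denominator_lower_bound[OF ray] unfolding D_def by blast
  have \<phi>_bound: "norm (\<phi> u) \<le> 2 / (u + 1)" if "u > 0" for u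
    unfolding \<phi>_def norm_of_real using ray_decay_weight_bounds(3)[OF that] .
  have "((\<lambda>s. integral {0<..} (\<lambda>u. \<phi> u / (D u + (s - t) * - 1))) has_field_derivative
      - integral {0<..} (\<lambda>u. \<phi> u * - 1 / (D u)^2)) (at t)"
    using \<phi>_bound c \<open>c > 0\<close> unfolding \<phi>_def D_def
    by (intro has_field_derivative_integral_inverse_affine[where K = 1])
       (auto intro!: continuous_intros continuous_on_ray_decay)
  then have "(H has_field_derivative integral {0<..} (\<lambda>u. \<phi> u / (D u)^2)) (at t)"
    by (simp add: H_def[abs_def] D_def algebra_simps)
  then have "((\<lambda>s. K * (s * H s)) has_field_derivative
      K * (H t + t * integral {0<..} (\<lambda>u. \<phi> u / (D u)^2))) (at t)"
    by (auto intro!: derivative_eq_intros simp: algebra_simps)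
  moreover have "X_term \<omega> \<sigma> \<Omega> \<theta> z g g' s = K * (s * H s)" for s
    unfolding X_term_def ray_int_Xsf[OF assms(1)] K_def H_def \<phi>_def Z_def by (simp add: mult_ac)
  moreover have "H t + t * integral {0<..} (\<lambda>u. \<phi> u / (D u)^2) = \<i> * Z * ray_decay_integral Z t"
    unfolding H_def \<phi>_def D_def by (rule ray_decay_integral_partial_fractions[OF ray])
  ultimately show ?thesis
    by (simp add: K_def Z_def)
qed

lemma has_field_derivative_ray_int_tau:
  fixes Z t :: complex
  assumes "Z \<noteq> 0" "t \<noteq> 0" "t \<notin> ray Z"
  shows "((\<lambda>Y. ray_int Y (\<lambda>t'. t / (t' - t) * (1 + 2 * pi * \<i> * Y / t') * exp (- 2 * pi * \<i> * Y / t')))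
      has_field_derivative 2 * pi * Z * ray_decay_integral Z t + 1 / Z) (at Z)"
proof -
  define \<phi> where "\<phi> u = complex_of_real ((1 + 2 * pi / u) * ray_decay u / u)" for u
  define D where "D u = \<i> * Z * of_real u - t" for u
  obtain c where "c > 0" and c: "\<And>u. u \<ge> 0 \<Longrightarrow> c * (u + 1) \<le> norm (D u)"
    using ray_denominator_lower_bound[OF assms] unfolding D_def by blast
  have \<phi>_bound: "norm (\<phi> u) \<le> (2 + 4 * pi) / (u + 1)" if "u > 0" for u
    unfolding \<phi>_def norm_of_real using ray_decay_weight_bounds(5)[OF that] .
  have "((\<lambda>Y. integral {0<..} (\<lambda>u. \<phi> u / (D u + (Y - Z) * (\<i> * of_real u)))) has_field_derivative
      - integral {0<..} (\<lambda>u. \<phi> u * (\<i> * of_real u) / (D u)^2)) (at Z)"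
    using \<phi>_bound c \<open>c > 0\<close>
    by (intro has_field_derivative_integral_inverse_affine[where K = 1])
       (auto simp: D_def \<phi>_def norm_mult intro!: continuous_intros continuous_on_ray_decay)
  then have derivative: "((\<lambda>Y. t * integral {0<..} (\<lambda>u. \<phi> u / (D u + (Y - Z) * (\<i> * of_real u))))
      has_field_derivative t * - integral {0<..} (\<lambda>u. \<phi> u * (\<i> * of_real u) / (D u)^2)) (at Z)"
    by (rule DERIV_cmult)
  have derivative_eq: "t * - integral {0<..} (\<lambda>u. \<phi> u * (\<i> * of_real u) / (D u)^2)
      = 2 * pi * Z * ray_decay_integral Z t + 1 / Z"
  proof -
    have "integral {0<..} (\<lambda>u. \<phi> u * (\<i> * of_real u) / (D u)^2)
        = integral {0<..} (\<lambda>u. \<i> * (of_real ((1 + 2 * pi / u) * ray_decay u) / (D u)^2))"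
      by (intro integral_cong) (auto simp: \<phi>_def)
    also have "\<dots> = \<i> * integral {0<..} (\<lambda>u. of_real ((1 + 2 * pi / u) * ray_decay u) / (D u)^2)"
      by (rule integral_mult_right)
    finally show ?thesis
      using ray_decay_integral_by_parts[OF assms] \<open>Z \<noteq> 0\<close> unfolding D_def
      by (simp add: algebra_simps)
  qed
  have near: "t * integral {0<..} (\<lambda>u. \<phi> u / (D u + (Y - Z) * (\<i> * of_real u)))
      = ray_int Y (\<lambda>t'. t / (t' - t) * (1 + 2 * pi * \<i> * Y / t') * exp (- 2 * pi * \<i> * Y / t'))"
    if "Y \<in> - {0}" for Y
  proof -
    have denominator: "D u + (Y - Z) * (\<i> * of_real u) = \<i> * Y * of_real u - t" for u
      by (simp add: D_def algebra_simps)
    from that have "Y \<noteq> 0"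
      by simp
    show ?thesis
      unfolding ray_int_tau[OF \<open>Y \<noteq> 0\<close>] \<phi>_def denominator ..
  qed
  show ?thesis
  proof (rule has_field_derivative_transform_within_open[OF derivative[unfolded derivative_eq]])
    show "open (- {0 :: complex})" "Z \<in> - {0}"
      using assms by auto
  qed (rule near)
qed

lemma Zc_fun_upd: "Zc (z(b := w)) g = Zc z g + of_int (g b) * (w - z b)"
proof -
  have "Zc (z(b := w)) g
      = (\<Sum>a\<in>UNIV. of_int (g a) * z a + (if a = b then of_int (g b) * (w - z b) else 0))"
    unfolding Zc_def by (rule sum.cong) (auto simp: algebra_simps)
  then show ?thesis
    by (simp add: sum.distrib Zc_def)
qed

lemma continuous_on_fun_upd_coordinate: "continuous_on UNIV (\<lambda>w. z(b := w))"
proof (intro continuous_on_coordinatewise_then_product)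
  fix i
  show "continuous_on UNIV (\<lambda>w. (z(b := w)) i)"
    by (cases "i = b") auto
qed

lemma has_field_derivative_branch_coordinate:
  fixes z :: "'m::finite \<Rightarrow> complex" and l :: "('m \<Rightarrow> complex) \<Rightarrow> complex"
  assumes "open U" "z \<in> U" "Zc z g \<noteq> 0" "t \<noteq> 0"
    and l: "continuous_on U l" "\<forall>w\<in>U. exp (l w) = Zc w g / t"
  shows "((\<lambda>w. l (z(b := w))) has_field_derivative of_int (g b) / Zc z g) (at (z b))"
proof -
  define V where "V = (\<lambda>w. z(b := w)) -` U"
  have "open V"
    unfolding V_def using \<open>open U\<close> continuous_on_fun_upd_coordinate by (rule open_vimage)
  have "z b \<in> V"
    using \<open>z \<in> U\<close> by (simp add: V_def)
  have "continuous_on V (\<lambda>w. l (z(b := w)))"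
    by (rule continuous_on_compose2[OF l(1) continuous_on_subset[OF continuous_on_fun_upd_coordinate]])
       (auto simp: V_def)
  then have l_continuous: "isCont (\<lambda>w. l (z(b := w))) (z b)"
    using \<open>open V\<close> \<open>z b \<in> V\<close> continuous_on_eq_continuous_at by blast
  have "((\<lambda>w. l (z(b := w))) has_field_derivative (of_int (g b) / t) / (Zc (z(b := z b)) g / t))
      (at (z b))"
  proof (rule has_field_derivative_continuous_log[OF \<open>open V\<close> \<open>z b \<in> V\<close> _ _ _ l_continuous])
    show "exp (l (z(b := w))) = Zc (z(b := w)) g / t" if "w \<in> V" for w
      using l(2) that by (simp add: V_def)
    show "((\<lambda>w. Zc (z(b := w)) g / t) has_field_derivative of_int (g b) / t) (at (z b))"
      unfolding Zc_fun_upd using \<open>t \<noteq> 0\<close> by (auto intro!: derivative_eq_intros)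
    show "Zc (z(b := z b)) g / t \<noteq> 0"
      using assms(3,4) by simp
  qed
  then show ?thesis
    using \<open>t \<noteq> 0\<close> by simp
qed

lemma has_field_derivative_tau_term:
  fixes z :: "'m::finite \<Rightarrow> complex"
  assumes "open U" "z \<in> U" and Zc_nonzero: "\<forall>w\<in>U. Zc w g \<noteq> 0" and "t \<noteq> 0" "t \<notin> ray (Zc z g)"
    and L: "continuous_on U (L g)" "\<forall>w\<in>U. exp (L g w) = Zc w g / t"
  shows "((\<lambda>w. tau_term \<sigma> \<Omega> \<theta> t L g (z(b := w))) has_field_derivative
      of_int (\<sigma> g) * of_rat (\<Omega> g) * exp (2 * pi * \<i> * Zc \<theta> g) *
      (2 * pi * Zc z g * of_int (g b) * ray_decay_integral (Zc z g) t)) (at (z b))"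
proof -
  define Z where "Z = Zc z g"
  define q :: complex where "q = of_int (g b)"
  define R where
    "R Y = ray_int Y (\<lambda>t'. t / (t' - t) * (1 + 2 * pi * \<i> * Y / t') * exp (- 2 * pi * \<i> * Y / t'))"
    for Y
  have "Z \<noteq> 0"
    using Zc_nonzero \<open>z \<in> U\<close> by (simp add: Z_def)
  have "((\<lambda>w. Zc (z(b := w)) g) has_field_derivative q) (at (z b))"
    unfolding Zc_fun_upd q_def by (auto intro!: derivative_eq_intros)
  then have R_derivative: "((\<lambda>w. R (Zc (z(b := w)) g)) has_field_derivative
      (2 * pi * Z * ray_decay_integral Z t + 1 / Z) * q) (at (z b))"
    using has_field_derivative_ray_int_tau[OF \<open>Z \<noteq> 0\<close> \<open>t \<noteq> 0\<close>] \<open>t \<notin> ray (Zc z g)\<close>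
    by (intro DERIV_chain2) (simp_all add: R_def[abs_def] Z_def)
  have L_derivative: "((\<lambda>w. L g (z(b := w))) has_field_derivative q / Z) (at (z b))"
    unfolding q_def Z_def using \<open>Z \<noteq> 0\<close>
    by (intro has_field_derivative_branch_coordinate[OF \<open>open U\<close> \<open>z \<in> U\<close> _ \<open>t \<noteq> 0\<close> L])
       (simp add: Z_def)
  have tau_eq: "tau_term \<sigma> \<Omega> \<theta> t L g (z(b := w))
      = of_int (\<sigma> g) * of_rat (\<Omega> g) * exp (2 * pi * \<i> * Zc \<theta> g)
        * (R (Zc (z(b := w)) g) - L g (z(b := w)))"
    for w
    unfolding tau_term_def R_def ..
  \<comment> \<open>The boundary term of the integration by parts cancels the derivative of the logarithm.\<close>
  have derivative_eq: "(2 * pi * Z * ray_decay_integral Z t + 1 / Z) * q - q / Z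
      = 2 * pi * Z * q * ray_decay_integral Z t"
    using \<open>Z \<noteq> 0\<close> by (simp add: field_simps)
  show ?thesis
    unfolding tau_eq
    using DERIV_cmult[OF DERIV_diff[OF R_derivative L_derivative],
        of "of_int (\<sigma> g) * of_rat (\<Omega> g) * exp (2 * pi * \<i> * Zc \<theta> g)"]
    unfolding derivative_eq unfolding Z_def q_def .
qed

lemma pair_basis_charge: "pair \<omega> (basis_charge a) g = (\<Sum>b\<in>UNIV. \<omega> a b * g b)"
proof -
  have "(\<Sum>b\<in>UNIV. basis_charge a a' * g b * \<omega> a' b) = (if a' = a then (\<Sum>b\<in>UNIV. \<omega> a b * g b) else 0)"
    for a'
    by (auto simp: basis_charge_def mult.commute)
  then show ?thesis
    unfolding pair_def by simp
qed

lemma sum_deriv_tau_term_eq_deriv_X_term: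
  fixes z :: "'m::finite \<Rightarrow> complex"
  assumes "open U" "z \<in> U" "t \<noteq> 0"
    and "\<Omega> g \<noteq> 0 \<Longrightarrow> (\<forall>w\<in>U. Zc w g \<noteq> 0) \<and> t \<notin> ray (Zc z g) \<and>
           continuous_on U (L g) \<and> (\<forall>w\<in>U. exp (L g w) = Zc w g / t)"
  shows "(\<Sum>b\<in>UNIV. of_int (\<omega> a b) * deriv (\<lambda>w. tau_term \<sigma> \<Omega> \<theta> t L g (z(b := w))) (z b))
       = - 2 * pi * \<i> * deriv (\<lambda>s. X_term \<omega> \<sigma> \<Omega> \<theta> z (basis_charge a) g s) t"
proof (cases "\<Omega> g = 0")
  case True
  then show ?thesis
    by (simp add: tau_term_def X_term_def)
next
  case False
  with assms(4) have Z: "\<forall>w\<in>U. Zc w g \<noteq> 0" and "t \<notin> ray (Zc z g)"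
    and L: "continuous_on U (L g)" "\<forall>w\<in>U. exp (L g w) = Zc w g / t"
    by blast+
  have "Zc z g \<noteq> 0"
    using Z \<open>z \<in> U\<close> by blast
  have tau_derivative: "deriv (\<lambda>w. tau_term \<sigma> \<Omega> \<theta> t L g (z(b := w))) (z b)
      = of_int (\<sigma> g) * of_rat (\<Omega> g) * exp (2 * pi * \<i> * Zc \<theta> g) *
        (2 * pi * Zc z g * of_int (g b) * ray_decay_integral (Zc z g) t)" for b
    using assms(1-3) Z \<open>t \<notin> ray (Zc z g)\<close> L by (intro DERIV_imp_deriv has_field_derivative_tau_term)
  have X_derivative: "deriv (\<lambda>s. X_term \<omega> \<sigma> \<Omega> \<theta> z (basis_charge a) g s) t
      = of_rat (\<Omega> g) * of_int (pair \<omega> (basis_charge a) g) * of_int (\<sigma> g) * exp (2 * pi * \<i> * Zc \<theta> g) *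
        (\<i> * Zc z g * ray_decay_integral (Zc z g) t)"
    using \<open>Zc z g \<noteq> 0\<close> \<open>t \<noteq> 0\<close> \<open>t \<notin> ray (Zc z g)\<close>
    by (intro DERIV_imp_deriv has_field_derivative_X_term)
  show ?thesis
    unfolding tau_derivative X_derivative pair_basis_charge of_int_sum of_int_mult
    by (simp add: sum_distrib_left sum_distrib_right mult_ac)
qed

lemma XTBA_div_Xsf:
  assumes "quad_refinement \<omega> \<sigma>"
  shows "XTBA \<omega> \<sigma> \<Omega> \<theta> z g s / Xsf \<sigma> \<theta> z g s
       = exp (1 / (2 * pi * \<i>) * (\<Sum>\<^sub>\<infinity>g'\<in>Gstar. X_term \<omega> \<sigma> \<Omega> \<theta> z g g' s))"
proof -
  have "\<sigma> g \<in> {-1, 1}"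
    using assms by (simp add: quad_refinement_def)
  then have "Xsf \<sigma> \<theta> z g s \<noteq> 0"
    by (auto simp: Xsf_def)
  then show ?thesis
    by (simp add: XTBA_def)
qed

lemma infsum_sum_swap:
  fixes f :: "'b \<Rightarrow> 'a \<Rightarrow> 'c::{topological_comm_monoid_add, t2_space}"
  assumes "finite B" "\<And>b. b \<in> B \<Longrightarrow> f b summable_on A"
  shows "(\<Sum>\<^sub>\<infinity>x\<in>A. \<Sum>b\<in>B. f b x) = (\<Sum>b\<in>B. \<Sum>\<^sub>\<infinity>x\<in>A. f b x)"
proof -
  have "((\<lambda>x. \<Sum>b\<in>B. f b x) has_sum (\<Sum>b\<in>B. \<Sum>\<^sub>\<infinity>x\<in>A. f b x)) A"
    using assms by (induction B rule: finite_induct) (auto intro: has_sum_add)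
  then show ?thesis
    by (rule infsumI)
qed

lemma deriv_log_tau_coordinate:
  assumes "termwise_diff Gstar (\<lambda>g w. tau_term \<sigma> \<Omega> \<theta> t L g (z(b := w))) (z b)"
  shows "deriv (\<lambda>w. log_tau \<sigma> \<Omega> \<theta> t L (z(b := w))) (z b)
       = 1 / (4 * pi\<^sup>2) * (\<Sum>\<^sub>\<infinity>g\<in>Gstar. deriv (\<lambda>w. tau_term \<sigma> \<Omega> \<theta> t L g (z(b := w))) (z b))"
  using assms unfolding termwise_diff_def log_tau_def
  by (intro DERIV_imp_deriv DERIV_cmult) blast

lemma sum_deriv_log_tau:
  fixes z :: "'m::finite \<Rightarrow> complex"
  assumes U: "open U" "z \<in> U" and "t \<noteq> 0"
    and charges: "\<And>g. g \<in> Gstar \<Longrightarrow> \<Omega> g \<noteq> 0 \<Longrightarrow> (\<forall>w\<in>U. Zc w g \<noteq> 0) \<and> t \<notin> ray (Zc z g) \<and>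
           continuous_on U (L g) \<and> (\<forall>w\<in>U. exp (L g w) = Zc w g / t)"
    and tau_termwise: "\<And>b. termwise_diff Gstar (\<lambda>g w. tau_term \<sigma> \<Omega> \<theta> t L g (z(b := w))) (z b)"
  shows "(\<Sum>b\<in>UNIV. of_int (\<omega> a b) * deriv (\<lambda>w. log_tau \<sigma> \<Omega> \<theta> t L (z(b := w))) (z b))
       = 1 / (2 * pi * \<i>) * (\<Sum>\<^sub>\<infinity>g\<in>Gstar. deriv (\<lambda>s. X_term \<omega> \<sigma> \<Omega> \<theta> z (basis_charge a) g s) t)"
proof -
  define d\<tau> where "d\<tau> b g = deriv (\<lambda>w. tau_term \<sigma> \<Omega> \<theta> t L g (z(b := w))) (z b)" for b g
  have summable: "(\<lambda>g. 1 / (4 * pi\<^sup>2) * (of_int (\<omega> a b) * d\<tau> b g)) summable_on Gstar" for b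
    using tau_termwise unfolding termwise_diff_def d\<tau>_def by (intro summable_on_cmult_right) blast
  have "(\<Sum>b\<in>UNIV. of_int (\<omega> a b) * deriv (\<lambda>w. log_tau \<sigma> \<Omega> \<theta> t L (z(b := w))) (z b))
      = (\<Sum>b\<in>UNIV. \<Sum>\<^sub>\<infinity>g\<in>Gstar. 1 / (4 * pi\<^sup>2) * (of_int (\<omega> a b) * d\<tau> b g))"
    unfolding deriv_log_tau_coordinate[OF tau_termwise] infsum_cmult_right' d\<tau>_def
    by (simp only: mult.left_commute)
  also have "\<dots> = (\<Sum>\<^sub>\<infinity>g\<in>Gstar. 1 / (4 * pi\<^sup>2) * (\<Sum>b\<in>UNIV. of_int (\<omega> a b) * d\<tau> b g))"
    unfolding sum_distrib_left using summable by (intro infsum_sum_swap[symmetric]) auto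
  also have "\<dots> = (\<Sum>\<^sub>\<infinity>g\<in>Gstar. 1 / (2 * pi * \<i>) * deriv (\<lambda>s. X_term \<omega> \<sigma> \<Omega> \<theta> z (basis_charge a) g s) t)"
  proof (rule infsum_cong)
    fix g :: "'m \<Rightarrow> int" assume "g \<in> Gstar"
    then have "(\<Sum>b\<in>UNIV. of_int (\<omega> a b) * d\<tau> b g)
        = - 2 * pi * \<i> * deriv (\<lambda>s. X_term \<omega> \<sigma> \<Omega> \<theta> z (basis_charge a) g s) t"
      unfolding d\<tau>_def using U \<open>t \<noteq> 0\<close> charges by (intro sum_deriv_tau_term_eq_deriv_X_term) auto
    then show "1 / (4 * pi\<^sup>2) * (\<Sum>b\<in>UNIV. of_int (\<omega> a b) * d\<tau> b g)
        = 1 / (2 * pi * \<i>) * deriv (\<lambda>s. X_term \<omega> \<sigma> \<Omega> \<theta> z (basis_charge a) g s) t"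
      by (simp add: field_simps power2_eq_square)
  qed
  also have "\<dots> = 1 / (2 * pi * \<i>) * (\<Sum>\<^sub>\<infinity>g\<in>Gstar. deriv (\<lambda>s. X_term \<omega> \<sigma> \<Omega> \<theta> z (basis_charge a) g s) t)"
    by (rule infsum_cmult_right')
  finally show ?thesis .
qed

theorem mainTheorem5:
  fixes \<omega> :: "'m::finite \<Rightarrow> 'm \<Rightarrow> int"
    and \<sigma> :: "('m \<Rightarrow> int) \<Rightarrow> int"
    and \<Omega> :: "('m \<Rightarrow> int) \<Rightarrow> rat"
    and z \<theta> :: "'m \<Rightarrow> complex"
    and U :: "('m \<Rightarrow> complex) set"
    and t :: complex
    and L :: "('m \<Rightarrow> int) \<Rightarrow> ('m \<Rightarrow> complex) \<Rightarrow> complex"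
  assumes skew: "\<forall>a b. \<omega> a b = - \<omega> b a"
    and inv: "invertible ((\<chi> a b. real_of_int (\<omega> a b)) :: real^'m^'m)"
    and qr: "quad_refinement \<omega> \<sigma>"
    and U: "open U" "z \<in> U"
    and Znz: "\<forall>g\<in>Gstar. \<Omega> g \<noteq> 0 \<longrightarrow> (\<forall>w\<in>U. Zc w g \<noteq> 0)"
    and uncoupled: "\<forall>g\<in>Gstar. \<forall>g'\<in>Gstar. \<Omega> g \<noteq> 0 \<longrightarrow> \<Omega> g' \<noteq> 0 \<longrightarrow> pair \<omega> g g' = 0"
    and t: "t \<noteq> 0" "\<forall>g\<in>Gstar. \<Omega> g \<noteq> 0 \<longrightarrow> t \<notin> ray (Zc z g)"
    and branch: "\<forall>g\<in>Gstar. \<Omega> g \<noteq> 0 \<longrightarrow>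
                   continuous_on U (L g) \<and> (\<forall>w\<in>U. exp (L g w) = Zc w g / t)"
    and tau_termwise: "\<forall>b. termwise_diff Gstar (\<lambda>g w. tau_term \<sigma> \<Omega> \<theta> t L g (z(b := w))) (z b)"
    and X_termwise: "\<forall>a. termwise_diff Gstar (\<lambda>g' s. X_term \<omega> \<sigma> \<Omega> \<theta> z (basis_charge a) g' s) t"
  shows "\<forall>a. ((\<lambda>s. XTBA \<omega> \<sigma> \<Omega> \<theta> z (basis_charge a) s / Xsf \<sigma> \<theta> z (basis_charge a) s)
            has_field_derivative
              ((\<Sum>b\<in>UNIV. of_int (\<omega> a b) * deriv (\<lambda>w. log_tau \<sigma> \<Omega> \<theta> t L (z(b := w))) (z b))
               * (XTBA \<omega> \<sigma> \<Omega> \<theta> z (basis_charge a) t / Xsf \<sigma> \<theta> z (basis_charge a) t)))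
            (at t)"
proof (intro allI)
  fix a
  define X where "X s = (\<Sum>\<^sub>\<infinity>g\<in>Gstar. X_term \<omega> \<sigma> \<Omega> \<theta> z (basis_charge a) g s)" for s
  have "(X has_field_derivative
      (\<Sum>\<^sub>\<infinity>g\<in>Gstar. deriv (\<lambda>s. X_term \<omega> \<sigma> \<Omega> \<theta> z (basis_charge a) g s) t)) (at t)"
    using X_termwise unfolding termwise_diff_def X_def[abs_def] by blast
  then have "((\<lambda>s. exp (1 / (2 * pi * \<i>) * X s)) has_field_derivative
      exp (1 / (2 * pi * \<i>) * X t) * (1 / (2 * pi * \<i>) *
        (\<Sum>\<^sub>\<infinity>g\<in>Gstar. deriv (\<lambda>s. X_term \<omega> \<sigma> \<Omega> \<theta> z (basis_charge a) g s) t))) (at t)"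
    by (rule DERIV_chain'[OF DERIV_cmult DERIV_exp])
  moreover have "(\<Sum>b\<in>UNIV. of_int (\<omega> a b) * deriv (\<lambda>w. log_tau \<sigma> \<Omega> \<theta> t L (z(b := w))) (z b))
      = 1 / (2 * pi * \<i>) * (\<Sum>\<^sub>\<infinity>g\<in>Gstar. deriv (\<lambda>s. X_term \<omega> \<sigma> \<Omega> \<theta> z (basis_charge a) g s) t)"
    using U t Znz branch tau_termwise by (intro sum_deriv_log_tau) auto
  ultimately show "((\<lambda>s. XTBA \<omega> \<sigma> \<Omega> \<theta> z (basis_charge a) s / Xsf \<sigma> \<theta> z (basis_charge a) s)
      has_field_derivative
        ((\<Sum>b\<in>UNIV. of_int (\<omega> a b) * deriv (\<lambda>w. log_tau \<sigma> \<Omega> \<theta> t L (z(b := w))) (z b))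
         * (XTBA \<omega> \<sigma> \<Omega> \<theta> z (basis_charge a) t / Xsf \<sigma> \<theta> z (basis_charge a) t))) (at t)"
    unfolding XTBA_div_Xsf[OF qr] X_def[symmetric] by (simp add: mult_ac)
qed

end
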